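(* Let $\bm X\in\mathbb{R}_+^{m\times n}$, let $(\bm W^k,\bm H^k)\in\mathbb{R}_{++}^{m\times r}\times\mathbb{R}_{++}^{r\times n}$, and let $\phi$ and $\hat f_k$ be as defined below. Then for any $L_k>0$ with $$L_k\ge\max\Big\{\max_{i\in[m],l\in[r]}\sum_{j=1}^n\alpha^k_{ilj}X_{ij},\ \max_{l\in[r],j\in[n]}\sum_{i=1}^m\alpha^k_{ilj}X_{ij},\ m,\ n\Big\},$$ both $L_k\phi-\hat f_k$ and $L_k\phi+\hat f_k$ are convex on $\mathbb{R}_{++}^{m\times r}\times\mathbb{R}_{++}^{r\times n}$, i.e. $(\hat f_k,\phi)$ is $L_k$-smad there. Consequently, for every $L\ge\max\{\max_i\sum_jX_{ij},\ \max_j\sum_iX_{ij},\ m,\ n\}$, the pair $(\hat f_k,\phi)$ is $L$-smad on $\mathbb{R}_{++}^{m\times r}\times\mathbb{R}_{++}^{r\times n}$ for every $k$ and every choice of $(\bm W^k,\bm H^k)$.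
   Context: $[n]=\{1,\dots,n\}$. Kernel: $\phi(\bm W,\bm H)=\sum_{i=1}^m\sum_{l=1}^r\big(-\log W_{il}+\tfrac12W_{il}^2\big)+\sum_{l=1}^r\sum_{j=1}^n\big(-\log H_{lj}+\tfrac12H_{lj}^2\big)$, with domain $\mathbb{R}_{++}^{m\times r}\times\mathbb{R}_{++}^{r\times n}$. Given $(\bm W^k,\bm H^k)$ with positive entries, $\alpha^k_{ilj}=\frac{W^k_{il}H^k_{lj}}{\sum_{l'=1}^rW^k_{il'}H^k_{l'j}}$ and $\hat f_k(\bm W,\bm H)=\sum_{i,j}\Big(X_{ij}\log X_{ij}-X_{ij}\sum_{l=1}^r\alpha^k_{ilj}\log\frac{W_{il}H_{lj}}{\alpha^k_{ilj}}-X_{ij}+(\bm W\bm H)_{ij}\Big)$ (convention $0\log0=0$). A pair $(h,\phi)$ is $L$-smad on an open convex set $C$ if $L\phi-h$ and $L\phi+h$ are convex on $C$. *)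

theory Defs
  imports "HOL-Analysis.Analysis"
begin

text \<open>Matrices are represented as real^'c^'r (rows indexed by 'r, columns by 'c).
  Dimensions: m = CARD('m), r = CARD('r), n = CARD('n).\<close>

definition xlogx :: "real \<Rightarrow> real" where
  "xlogx x = (if x = 0 then 0 else x * ln x)"

definition pos_domain :: "((real^'r^'m) \<times> (real^'n^'r)) set" where
  "pos_domain = {(W, H). (\<forall>i l. 0 < W $ i $ l) \<and> (\<forall>l j. 0 < H $ l $ j)}"

definition kernel_phi :: "(real^'r^'m) \<times> (real^'n^'r) \<Rightarrow> real" where
  "kernel_phi WH = (case WH of (W, H) \<Rightarrow>
      (\<Sum>i\<in>UNIV. \<Sum>l\<in>UNIV. - ln (W $ i $ l) + (W $ i $ l)^2 / 2)
    + (\<Sum>l\<in>UNIV. \<Sum>j\<in>UNIV. - ln (H $ l $ j) + (H $ l $ j)^2 / 2))"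

definition alpha :: "real^'r^'m \<Rightarrow> real^'n^'r \<Rightarrow> 'm \<Rightarrow> 'r \<Rightarrow> 'n \<Rightarrow> real" where
  "alpha Wk Hk i l j = Wk $ i $ l * Hk $ l $ j / (\<Sum>l'\<in>UNIV. Wk $ i $ l' * Hk $ l' $ j)"

definition fhat :: "real^'n^'m \<Rightarrow> real^'r^'m \<Rightarrow> real^'n^'r
                    \<Rightarrow> (real^'r^'m) \<times> (real^'n^'r) \<Rightarrow> real" where
  "fhat X Wk Hk WH = (case WH of (W, H) \<Rightarrow>
      (\<Sum>i\<in>UNIV. \<Sum>j\<in>UNIV.
          xlogx (X $ i $ j)
        - X $ i $ j * (\<Sum>l\<in>UNIV. alpha Wk Hk i l j *
                         ln (W $ i $ l * H $ l $ j / alpha Wk Hk i l j))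
        - X $ i $ j + (W ** H) $ i $ j))"

definition smad :: "real \<Rightarrow> ('a::real_vector \<Rightarrow> real) \<Rightarrow> ('a \<Rightarrow> real) \<Rightarrow> 'a set \<Rightarrow> bool" where
  "smad L h \<phi> C \<longleftrightarrow> convex_on C (\<lambda>x. L * \<phi> x - h x) \<and> convex_on C (\<lambda>x. L * \<phi> x + h x)"

end

theory Submission
  imports Defs
begin

text \<open>Splitting the logarithm, fhat_k equals a constant minus the weighted logarithms
  a_il ln W_il and b_lj ln H_lj, where a_il = sum_j alpha_ilj X_ij and b_lj = sum_i alpha_ilj X_ij,
  plus the bilinear term sum W_il H_lj.  For s = 1 or s = -1 the identity
  s W H = (W + s H)^2/2 - W^2/2 - H^2/2, summed over i, l, j, writes L phi + s fhat_k as a sum of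
  the convex squares (W_il + s H_lj)^2/2 and of the one-variable functions
  -(L + s a_il) ln t + (L - n) t^2/2 and -(L + s b_lj) ln t + (L - m) t^2/2, which are convex as soon
  as L dominates the weights and the dimensions.  Since alpha <= 1, the row and column sums of X
  dominate the weights for every (W^k, H^k).\<close>

lemma convex_on_sum_fun:
  assumes "finite I" "convex S" "\<And>i. i \<in> I \<Longrightarrow> convex_on S (f i)"
  shows "convex_on S (\<lambda>x. \<Sum>i\<in>I. f i x)"
  using assms(1,3)
proof (induction I rule: finite_induct)
  case empty
  then show ?case using assms(2) by (simp add: convex_on_const)
next
  case (insert a F)
  then show ?case by (simp add: convex_on_add)
qed

lemma convex_on_cong:
  assumes "\<And>x. x \<in> S \<Longrightarrow> f x = g x"
  shows "convex_on S f \<longleftrightarrow> convex_on S g"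
  using assms by (auto simp: convex_on_def convex_def)

lemma convex_on_linear_comp:
  assumes "convex_on T g" "linear l" "convex S" "l ` S \<subseteq> T"
  shows "convex_on S (\<lambda>x. g (l x))"
  using assms unfolding convex_on_def by (auto simp: linear_add linear_scale image_subset_iff)

lemma convex_on_neg_ln_plus_square:
  fixes c d :: real
  assumes "0 \<le> c" "0 \<le> d"
  shows "convex_on {0<..} (\<lambda>t. - c * ln t + d * t^2)"
proof -
  have "convex_on {0<..} (\<lambda>t. c * (- ln t) + d * t^2)"
    using assms ln_concave convex_on_subset[OF convex_power2]
    by (intro convex_on_add convex_on_cmul) (auto simp: concave_on_def)
  then show ?thesis by simp
qed

lemma convex_pos_domain: "convex (pos_domain :: ((real^'r^'m) \<times> (real^'n^'r)) set)"
  unfolding convex_def pos_domain_def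
  by (auto intro!: add_pos_nonneg add_nonneg_pos simp: le_less)

lemma convex_on_pos_domain_log_barrier:
  fixes A :: "'m::finite \<Rightarrow> 'r::finite \<Rightarrow> real" and B :: "'r \<Rightarrow> 'n::finite \<Rightarrow> real"
    and s \<beta> \<gamma> :: real
  assumes "\<And>i l. 0 \<le> A i l" "\<And>l j. 0 \<le> B l j" "0 \<le> \<beta>" "0 \<le> \<gamma>"
  shows "convex_on (pos_domain :: ((real^'r^'m) \<times> (real^'n^'r)) set) (\<lambda>(W, H).
      (\<Sum>i\<in>UNIV. \<Sum>l\<in>UNIV. - A i l * ln (W $ i $ l) + \<beta> * (W $ i $ l)^2)
    + (\<Sum>l\<in>UNIV. \<Sum>j\<in>UNIV. - B l j * ln (H $ l $ j) + \<gamma> * (H $ l $ j)^2)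
    + (\<Sum>i\<in>UNIV. \<Sum>l\<in>UNIV. \<Sum>j\<in>UNIV. (W $ i $ l + s * H $ l $ j)^2 / 2))"
proof -
  note sum_rule = convex_on_sum_fun[OF finite convex_pos_domain]
  have W_part: "convex_on pos_domain (\<lambda>p :: (real^'r^'m) \<times> (real^'n^'r).
      - A i l * ln (fst p $ i $ l) + \<beta> * (fst p $ i $ l)^2)" for i l
    by (rule convex_on_linear_comp[OF convex_on_neg_ln_plus_square[OF assms(1,3)] _
          convex_pos_domain])
      (auto intro!: linearI simp: pos_domain_def)
  have H_part: "convex_on pos_domain (\<lambda>p :: (real^'r^'m) \<times> (real^'n^'r).
      - B l j * ln (snd p $ l $ j) + \<gamma> * (snd p $ l $ j)^2)" for l j
    by (rule convex_on_linear_comp[OF convex_on_neg_ln_plus_square[OF assms(2,4)] _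
          convex_pos_domain])
      (auto intro!: linearI simp: pos_domain_def)
  have "convex_on UNIV (\<lambda>t::real. t^2 / 2)"
    using convex_power2 by (auto intro: convex_on_cdiv)
  then have coupling_part: "convex_on pos_domain (\<lambda>p :: (real^'r^'m) \<times> (real^'n^'r).
      (fst p $ i $ l + s * snd p $ l $ j)^2 / 2)" for i l j
    by (rule convex_on_linear_comp[OF _ _ convex_pos_domain])
      (auto intro!: linearI simp: algebra_simps)
  show ?thesis
    unfolding split_def
    by (intro convex_on_add sum_rule W_part H_part coupling_part)
qed

lemma sum_half_square_plus:
  fixes W :: "real^'r^'m" and H :: "real^'n^'r" and s :: real
  shows "(\<Sum>i\<in>UNIV. \<Sum>l\<in>UNIV. \<Sum>j\<in>UNIV. (W $ i $ l + s * H $ l $ j)^2 / 2)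
    = real CARD('n) / 2 * (\<Sum>i\<in>UNIV. \<Sum>l\<in>UNIV. (W $ i $ l)^2)
      + s * (\<Sum>i\<in>UNIV. \<Sum>l\<in>UNIV. \<Sum>j\<in>UNIV. W $ i $ l * H $ l $ j)
      + s^2 * real CARD('m) / 2 * (\<Sum>l\<in>UNIV. \<Sum>j\<in>UNIV. (H $ l $ j)^2)"
proof -
  have square: "(x + s * y)^2 / 2 = x^2 / 2 + s * (x * y) + s^2 * (y^2 / 2)" for x y :: real
    by (simp add: power2_sum power_mult_distrib field_simps)
  have "(\<Sum>i\<in>UNIV. \<Sum>l\<in>UNIV. \<Sum>j\<in>UNIV. (W $ i $ l + s * H $ l $ j)^2 / 2)
      = (\<Sum>i\<in>UNIV. \<Sum>l\<in>UNIV. \<Sum>j\<in>(UNIV::'n set). (W $ i $ l)^2 / 2)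
        + s * (\<Sum>i\<in>UNIV. \<Sum>l\<in>UNIV. \<Sum>j\<in>UNIV. W $ i $ l * H $ l $ j)
        + s^2 * (\<Sum>i\<in>(UNIV::'m set). \<Sum>l\<in>UNIV. \<Sum>j\<in>UNIV. (H $ l $ j)^2 / 2)"
    by (simp only: square sum.distrib sum_distrib_left)
  then show ?thesis
    by (simp add: sum_distrib_left sum_divide_distrib mult_ac)
qed

lemma alpha_pos:
  assumes "(Wk, Hk) \<in> pos_domain"
  shows "0 < alpha Wk Hk i l j"
  using assms by (auto simp: alpha_def pos_domain_def intro!: divide_pos_pos sum_pos)

lemma alpha_le_one:
  assumes "(Wk, Hk) \<in> pos_domain"
  shows "alpha Wk Hk i l j \<le> 1"
proof -
  have "Wk $ i $ l * Hk $ l $ j \<le> (\<Sum>l'\<in>UNIV. Wk $ i $ l' * Hk $ l' $ j)"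
    using assms by (intro member_le_sum) (auto simp: pos_domain_def less_imp_le)
  moreover have "0 < (\<Sum>l'\<in>UNIV. Wk $ i $ l' * Hk $ l' $ j)"
    using assms by (intro sum_pos) (auto simp: pos_domain_def)
  ultimately show ?thesis by (simp add: alpha_def)
qed

definition fhat_weight_W :: "real^'n^'m \<Rightarrow> real^'r^'m \<Rightarrow> real^'n^'r \<Rightarrow> 'm \<Rightarrow> 'r \<Rightarrow> real" where
  "fhat_weight_W X Wk Hk i l = (\<Sum>j\<in>UNIV. alpha Wk Hk i l j * X $ i $ j)"

definition fhat_weight_H :: "real^'n^'m \<Rightarrow> real^'r^'m \<Rightarrow> real^'n^'r \<Rightarrow> 'r \<Rightarrow> 'n \<Rightarrow> real" where
  "fhat_weight_H X Wk Hk l j = (\<Sum>i\<in>UNIV. alpha Wk Hk i l j * X $ i $ j)"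

lemma fhat_decomposition:
  fixes X :: "real^'n^'m" and Wk :: "real^'r^'m" and Hk :: "real^'n^'r"
  assumes "(Wk, Hk) \<in> pos_domain"
  obtains c where "\<And>W H. (W, H) \<in> pos_domain \<Longrightarrow> fhat X Wk Hk (W, H) = c
      - (\<Sum>i\<in>UNIV. \<Sum>l\<in>UNIV. fhat_weight_W X Wk Hk i l * ln (W $ i $ l))
      - (\<Sum>l\<in>UNIV. \<Sum>j\<in>UNIV. fhat_weight_H X Wk Hk l j * ln (H $ l $ j))
      + (\<Sum>i\<in>UNIV. \<Sum>l\<in>UNIV. \<Sum>j\<in>UNIV. W $ i $ l * H $ l $ j)"
proof
  let ?a = "alpha Wk Hk"
  fix W :: "real^'r^'m" and H :: "real^'n^'r"
  assume WH: "(W, H) \<in> pos_domain"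
  have ln_split:
    "ln (W $ i $ l * H $ l $ j / ?a i l j) = ln (W $ i $ l) + ln (H $ l $ j) - ln (?a i l j)"
    for i :: 'm and l j
  proof -
    have "0 < W $ i $ l" "0 < H $ l $ j" using WH by (auto simp: pos_domain_def)
    then show ?thesis using alpha_pos[OF assms, of i l j] by (simp add: ln_div ln_mult)
  qed
  have "fhat X Wk Hk (W, H) = (\<Sum>i\<in>UNIV. \<Sum>j\<in>UNIV.
        xlogx (X $ i $ j) + X $ i $ j * (\<Sum>l\<in>UNIV. ?a i l j * ln (?a i l j)) - X $ i $ j)
      - (\<Sum>i\<in>UNIV. \<Sum>j\<in>UNIV. \<Sum>l\<in>UNIV. ?a i l j * X $ i $ j * ln (W $ i $ l))
      - (\<Sum>i\<in>UNIV. \<Sum>j\<in>UNIV. \<Sum>l\<in>UNIV. ?a i l j * X $ i $ j * ln (H $ l $ j))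
      + (\<Sum>i\<in>UNIV. \<Sum>j\<in>UNIV. \<Sum>l\<in>UNIV. W $ i $ l * H $ l $ j)"
    unfolding fhat_def prod.case ln_split
    by (simp add: matrix_matrix_mult_def algebra_simps sum.distrib
        sum_subtractf sum_distrib_left)
  moreover have swap_inner: "(\<Sum>i\<in>UNIV. \<Sum>j\<in>UNIV. \<Sum>l\<in>UNIV. f i l j)
      = (\<Sum>i\<in>UNIV. \<Sum>l\<in>UNIV. \<Sum>j\<in>UNIV. f i l j)"
    for f :: "'m \<Rightarrow> 'r \<Rightarrow> 'n \<Rightarrow> real"
    by (rule sum.cong[OF refl sum.swap])
  moreover have "(\<Sum>i\<in>UNIV. \<Sum>j\<in>UNIV. \<Sum>l\<in>UNIV. f i l j)
      = (\<Sum>l\<in>UNIV. \<Sum>j\<in>UNIV. \<Sum>i\<in>UNIV. f i l j)"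
    for f :: "'m \<Rightarrow> 'r \<Rightarrow> 'n \<Rightarrow> real"
    unfolding swap_inner by (subst sum.swap) (rule sum.cong[OF refl sum.swap])
  ultimately show "fhat X Wk Hk (W, H) = (\<Sum>i\<in>UNIV. \<Sum>j\<in>UNIV.
        xlogx (X $ i $ j) + X $ i $ j * (\<Sum>l\<in>UNIV. ?a i l j * ln (?a i l j)) - X $ i $ j)
      - (\<Sum>i\<in>UNIV. \<Sum>l\<in>UNIV. fhat_weight_W X Wk Hk i l * ln (W $ i $ l))
      - (\<Sum>l\<in>UNIV. \<Sum>j\<in>UNIV. fhat_weight_H X Wk Hk l j * ln (H $ l $ j))
      + (\<Sum>i\<in>UNIV. \<Sum>l\<in>UNIV. \<Sum>j\<in>UNIV. W $ i $ l * H $ l $ j)"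
    by (simp add: fhat_weight_W_def fhat_weight_H_def sum_distrib_right)
qed

lemma kernel_plus_fhat_convex:
  fixes X :: "real^'n^'m" and Wk :: "real^'r^'m" and Hk :: "real^'n^'r" and L s :: real
  assumes pk: "(Wk, Hk) \<in> pos_domain" and s: "s^2 = 1"
    and "\<And>i l. 0 \<le> L + s * fhat_weight_W X Wk Hk i l"
    and "\<And>l j. 0 \<le> L + s * fhat_weight_H X Wk Hk l j"
    and "real CARD('n) \<le> L" "real CARD('m) \<le> L"
  shows "convex_on pos_domain (\<lambda>p. L * kernel_phi p + s * fhat X Wk Hk p)"
proof -
  let ?a = "fhat_weight_W X Wk Hk" and ?b = "fhat_weight_H X Wk Hk"
  let ?n = "real CARD('n)" and ?m = "real CARD('m)"
  obtain c where fhat_eq: "\<And>W H. (W, H) \<in> pos_domain \<Longrightarrow> fhat X Wk Hk (W, H) = c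
      - (\<Sum>i\<in>UNIV. \<Sum>l\<in>UNIV. ?a i l * ln (W $ i $ l))
      - (\<Sum>l\<in>UNIV. \<Sum>j\<in>UNIV. ?b l j * ln (H $ l $ j))
      + (\<Sum>i\<in>UNIV. \<Sum>l\<in>UNIV. \<Sum>j\<in>UNIV. W $ i $ l * H $ l $ j)"
    using fhat_decomposition[OF pk] by blast
  define G :: "(real^'r^'m) \<times> (real^'n^'r) \<Rightarrow> real" where "G = (\<lambda>(W, H).
      (\<Sum>i\<in>UNIV. \<Sum>l\<in>UNIV. - (L + s * ?a i l) * ln (W $ i $ l) + (L - ?n) / 2 * (W $ i $ l)^2)
    + (\<Sum>l\<in>UNIV. \<Sum>j\<in>UNIV. - (L + s * ?b l j) * ln (H $ l $ j) + (L - ?m) / 2 * (H $ l $ j)^2)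
    + (\<Sum>i\<in>UNIV. \<Sum>l\<in>UNIV. \<Sum>j\<in>UNIV. (W $ i $ l + s * H $ l $ j)^2 / 2))"
  have "convex_on pos_domain (\<lambda>p. s * c + G p)"
    unfolding G_def using assms
    by (intro convex_on_add convex_on_pos_domain_log_barrier)
      (auto simp: convex_on_const convex_pos_domain)
  moreover have "s * c + G (W, H) = L * kernel_phi (W, H) + s * fhat X Wk Hk (W, H)"
    if "(W, H) \<in> pos_domain" for W H
    unfolding G_def kernel_phi_def fhat_eq[OF that] prod.case sum_half_square_plus s
    by (simp add: sum.distrib sum_subtractf sum_distrib_left algebra_simps diff_divide_distrib)
  ultimately show ?thesis
    by (subst convex_on_cong[where g = "\<lambda>p. s * c + G p"]) auto
qed

lemma fhat_weight_W_nonneg: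
  assumes "(Wk, Hk) \<in> pos_domain" "\<forall>i j. 0 \<le> X $ i $ j"
  shows "0 \<le> fhat_weight_W X Wk Hk i l"
  using assms(2) alpha_pos[OF assms(1)]
  by (auto simp: fhat_weight_W_def less_imp_le intro!: sum_nonneg mult_nonneg_nonneg)

lemma fhat_weight_H_nonneg:
  assumes "(Wk, Hk) \<in> pos_domain" "\<forall>i j. 0 \<le> X $ i $ j"
  shows "0 \<le> fhat_weight_H X Wk Hk l j"
  using assms(2) alpha_pos[OF assms(1)]
  by (auto simp: fhat_weight_H_def less_imp_le intro!: sum_nonneg mult_nonneg_nonneg)

lemma fhat_weight_W_le_row_sum:
  assumes "(Wk, Hk) \<in> pos_domain" "\<forall>i j. 0 \<le> X $ i $ j"
  shows "fhat_weight_W X Wk Hk i l \<le> (\<Sum>j\<in>UNIV. X $ i $ j)"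
  unfolding fhat_weight_W_def using assms(2) alpha_pos[OF assms(1)] alpha_le_one[OF assms(1)]
  by (intro sum_mono mult_left_le_one_le) (auto intro: less_imp_le)

lemma fhat_weight_H_le_column_sum:
  assumes "(Wk, Hk) \<in> pos_domain" "\<forall>i j. 0 \<le> X $ i $ j"
  shows "fhat_weight_H X Wk Hk l j \<le> (\<Sum>i\<in>UNIV. X $ i $ j)"
  unfolding fhat_weight_H_def using assms(2) alpha_pos[OF assms(1)] alpha_le_one[OF assms(1)]
  by (intro sum_mono mult_left_le_one_le) (auto intro: less_imp_le)

lemma smad_fhat_kernel:
  fixes X :: "real^'n^'m" and Wk :: "real^'r^'m" and Hk :: "real^'n^'r" and L :: real
  assumes pk: "(Wk, Hk) \<in> pos_domain" and X: "\<forall>i j. 0 \<le> X $ i $ j"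
    and W_weight: "\<And>i l. fhat_weight_W X Wk Hk i l \<le> L"
    and H_weight: "\<And>l j. fhat_weight_H X Wk Hk l j \<le> L"
    and dims: "real CARD('m) \<le> L" "real CARD('n) \<le> L"
  shows "smad L (fhat X Wk Hk) kernel_phi pos_domain"
proof -
  have "convex_on pos_domain (\<lambda>p. L * kernel_phi p + s * fhat X Wk Hk p)"
    if "s = 1 \<or> s = -1" for s
    using that dims W_weight H_weight fhat_weight_W_nonneg[OF pk X] fhat_weight_H_nonneg[OF pk X]
    by (intro kernel_plus_fhat_convex[OF pk]) (auto intro: add_nonneg_nonneg)
  from this[of "-1"] this[of 1] show ?thesis
    by (simp add: smad_def)
qed

lemma Max_range_ge: "f x \<le> Max (range (f :: 'a::finite \<Rightarrow> 'b::linorder))"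
  by simp

theorem mainTheorem6:
  fixes X :: "real^'n^'m"
    and Wk :: "real^'r^'m" and Hk :: "real^'n^'r"
    and Lk :: real
  assumes X_nonneg: "\<forall>i j. 0 \<le> X $ i $ j"
  shows "((Wk, Hk) \<in> pos_domain \<and> 0 < Lk \<and>
          Lk \<ge> max (max (Max ((\<lambda>(i, l). \<Sum>j\<in>UNIV. alpha Wk Hk i l j * X $ i $ j) ` UNIV))
                         (Max ((\<lambda>(l, j). \<Sum>i\<in>UNIV. alpha Wk Hk i l j * X $ i $ j) ` UNIV)))
                    (max (real CARD('m)) (real CARD('n)))
           \<longrightarrow> smad Lk (fhat X Wk Hk) kernel_phi pos_domain)
       \<and> (\<forall>L. L \<ge> max (max (Max ((\<lambda>i. \<Sum>j\<in>UNIV. X $ i $ j) ` UNIV))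
                              (Max ((\<lambda>j. \<Sum>i\<in>UNIV. X $ i $ j) ` UNIV)))
                         (max (real CARD('m)) (real CARD('n)))
            \<longrightarrow> (\<forall>Wk' :: real^'r^'m. \<forall>Hk' :: real^'n^'r. (Wk', Hk') \<in> pos_domain
                   \<longrightarrow> smad L (fhat X Wk' Hk') kernel_phi pos_domain))"
proof (intro conjI impI allI)
  assume "(Wk, Hk) \<in> pos_domain \<and> 0 < Lk \<and> Lk \<ge> max (max
      (Max ((\<lambda>(i, l). \<Sum>j\<in>UNIV. alpha Wk Hk i l j * X $ i $ j) ` UNIV))
      (Max ((\<lambda>(l, j). \<Sum>i\<in>UNIV. alpha Wk Hk i l j * X $ i $ j) ` UNIV)))
      (max (real CARD('m)) (real CARD('n)))"
  then show "smad Lk (fhat X Wk Hk) kernel_phi pos_domain"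
    using Max_range_ge[of "case_prod (fhat_weight_W X Wk Hk)"]
      Max_range_ge[of "case_prod (fhat_weight_H X Wk Hk)"]
    by (intro smad_fhat_kernel[OF _ X_nonneg])
      (force simp: fhat_weight_W_def fhat_weight_H_def)+
next
  fix L :: real and Wk' :: "real^'r^'m" and Hk' :: "real^'n^'r"
  assume "L \<ge> max (max (Max ((\<lambda>i. \<Sum>j\<in>UNIV. X $ i $ j) ` UNIV))
      (Max ((\<lambda>j. \<Sum>i\<in>UNIV. X $ i $ j) ` UNIV))) (max (real CARD('m)) (real CARD('n)))"
    and pk: "(Wk', Hk') \<in> pos_domain"
  then show "smad L (fhat X Wk' Hk') kernel_phi pos_domain"
    using Max_range_ge[of "\<lambda>i. \<Sum>j\<in>UNIV. X $ i $ j"]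
      Max_range_ge[of "\<lambda>j. \<Sum>i\<in>UNIV. X $ i $ j"]
    by (intro smad_fhat_kernel[OF pk X_nonneg])
      (auto intro: order_trans[OF fhat_weight_W_le_row_sum[OF pk X_nonneg]]
        order_trans[OF fhat_weight_H_le_column_sum[OF pk X_nonneg]])
qed

end
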